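(* Let $D$ be a square-free integer, let $\mathbb{Z}[\sqrt{D}]$ denote the ring of integers of $\mathbb{Q}(\sqrt{D})$, let $p$ be a prime integer which is irreducible but not prime in $\mathbb{Z}[\sqrt{D}]$, let $z\in I_p(D)$ and $k=\lVert z\rVert/p$. Then $A(p,z)$ has property (CZ) if and only if the following holds, according to the case: Case 1 ($D\equiv 1\pmod 4$ and $z=\frac{z_1+z_2\sqrt{D}}{2}$ with $z_1,z_2$ odd integers): there exist integers $b_1,b_2$ such that the numbers $a_1=\frac{4p-z_1b_1+z_2b_2D}{2p}$, $a_2=\frac{z_2b_1-z_1b_2}{2p}$, $c_1=\frac{-(z_1^2+z_2^2D)b_1+2z_1z_2Db_2+4z_1p}{4p^2}$, $c_2=\frac{2z_1z_2b_1-(z_1^2+z_2^2D)b_2-4z_2p}{4p^2}$ are integers, $0=(p+k)b_1^2-(p+k)Db_2^2-2z_1b_1+2z_2b_2D+4p-4p^2$, and the elements $\frac{a_1+a_2\sqrt D}{2},\frac{b_1+b_2\sqrt D}{2},\frac{c_1+c_2\sqrt D}{2}$ lie in $\mathbb{Z}[\sqrt D]$; Case 2 ($D\equiv 1\pmod 4$ and $z=z_1+z_2\sqrt{D}$ with $z_1,z_2\in\mathbb{Z}$): there exist integers $b_1,b_2$ such that the numbers $a_1=\frac{2p-z_1b_1+z_2b_2D}{p}$, $a_2=\frac{z_2b_1-z_1b_2}{p}$, $c_1=\frac{-(z_1^2+z_2^2D)b_1+2z_1z_2Db_2+2z_1p}{p^2}$, $c_2=\frac{2z_1z_2b_1-(z_1^2+z_2^2D)b_2-2z_2p}{p^2}$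 are integers, $0=(p+k)b_1^2-(p+k)Db_2^2-4z_1b_1+4z_2b_2D+4p-4p^2$, and the elements $\frac{a_1+a_2\sqrt D}{2},\frac{b_1+b_2\sqrt D}{2},\frac{c_1+c_2\sqrt D}{2}$ lie in $\mathbb{Z}[\sqrt D]$; Case 3 ($D\equiv 2,3\pmod 4$ and $z=z_1+z_2\sqrt{D}$ with $z_1,z_2\in\mathbb{Z}$): there exist integers $b_1,b_2$ such that the numbers $a_1=\frac{p-z_1b_1+z_2b_2D}{p}$, $a_2=\frac{z_2b_1-z_1b_2}{p}$, $c_1=\frac{-(z_1^2+z_2^2D)b_1+2z_1z_2Db_2+z_1p}{p^2}$, $c_2=\frac{2z_1z_2b_1-(z_1^2+z_2^2D)b_2-z_2p}{p^2}$ are integers and $0=(p+k)b_1^2-(p+k)Db_2^2-2z_1b_1+2z_2Db_2+p-p^2$.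
   Context: $\mathbb{Z}[\sqrt{D}]=\{a+b\sqrt{D}:a,b\in\mathbb{Z}\}$ if $D\equiv 2,3 \pmod 4$ and $\{\frac{a+b\sqrt{D}}{2}:a,b\in\mathbb{Z},a\equiv b \pmod 2\}$ if $D\equiv 1\pmod 4$. $\bar z$ denotes the conjugate and $\lVert z\rVert=z\bar z$ the norm. $I_p(D)$ is the set of all non-unit $z\in\mathbb{Z}[\sqrt{D}]$ such that $z\notin\langle p\rangle$ but there exists $m\notin\langle p\rangle$ with $zm\in\langle p\rangle$ (for such $z$, $p$ divides $\lVert z\rVert$). $A(p,z)=\begin{pmatrix} p & z\\ \bar z & \lVert z\rVert/p\end{pmatrix}$. A matrix $A(p,z)$ has property (CZ) if there exist $a,b,c\in\mathbb{Z}[\sqrt{D}]$ with $a(1-a)=bc$ such that $A(p,z)=\begin{pmatrix} a&b\\ c&1-a\end{pmatrix}\begin{pmatrix}\bar a&\bar c\\ \bar b&1-\bar a\end{pmatrix}$. *)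

theory Defs
  imports Complex_Main "HOL-Computational_Algebra.Squarefree"
begin

text \<open>Elements of Q(sqrt D) are represented by their coordinates: the pair (x, y) of
  rationals stands for x + y * sqrt D.  Since D is square-free and D \<noteq> 1, sqrt D is
  irrational, so these coordinates are unique.\<close>

type_synonym qd = "rat \<times> rat"

definition qadd :: "qd \<Rightarrow> qd \<Rightarrow> qd" where
  "qadd z w = (fst z + fst w, snd z + snd w)"

definition qsub :: "qd \<Rightarrow> qd \<Rightarrow> qd" where
  "qsub z w = (fst z - fst w, snd z - snd w)"

definition qmul :: "int \<Rightarrow> qd \<Rightarrow> qd \<Rightarrow> qd" where
  "qmul D z w = (fst z * fst w + of_int D * snd z * snd w, fst z * snd w + snd z * fst w)"

definition qone :: qd where "qone = (1, 0)"

definition qof_int :: "int \<Rightarrow> qd" where "qof_int n = (of_int n, 0)"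

definition qcnj :: "qd \<Rightarrow> qd" where "qcnj z = (fst z, - snd z)"

definition qnorm :: "int \<Rightarrow> qd \<Rightarrow> rat" where
  "qnorm D z = fst z ^ 2 - of_int D * snd z ^ 2"

definition ZD :: "int \<Rightarrow> qd set" where
  "ZD D = (if D mod 4 = 1
           then {z. \<exists>a b :: int. even (a - b) \<and> z = (of_int a / 2, of_int b / 2)}
           else {z. \<exists>a b :: int. z = (of_int a, of_int b)})"

definition qunit :: "int \<Rightarrow> qd \<Rightarrow> bool" where
  "qunit D z \<longleftrightarrow> z \<in> ZD D \<and> (\<exists>w \<in> ZD D. qmul D z w = qone)"

definition qdvd :: "int \<Rightarrow> qd \<Rightarrow> qd \<Rightarrow> bool" where
  "qdvd D x y \<longleftrightarrow> (\<exists>m \<in> ZD D. y = qmul D x m)"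

definition pideal :: "int \<Rightarrow> qd \<Rightarrow> qd set" where
  "pideal D x = {qmul D x m | m. m \<in> ZD D}"

definition irreducible_ZD :: "int \<Rightarrow> qd \<Rightarrow> bool" where
  "irreducible_ZD D x \<longleftrightarrow> x \<in> ZD D \<and> x \<noteq> (0, 0) \<and> \<not> qunit D x \<and>
     (\<forall>u \<in> ZD D. \<forall>v \<in> ZD D. x = qmul D u v \<longrightarrow> qunit D u \<or> qunit D v)"

definition prime_ZD :: "int \<Rightarrow> qd \<Rightarrow> bool" where
  "prime_ZD D x \<longleftrightarrow> x \<in> ZD D \<and> x \<noteq> (0, 0) \<and> \<not> qunit D x \<and>
     (\<forall>u \<in> ZD D. \<forall>v \<in> ZD D. qdvd D x (qmul D u v) \<longrightarrow> qdvd D x u \<or> qdvd D x v)"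

definition Ip :: "int \<Rightarrow> int \<Rightarrow> qd set" where
  "Ip D p = {z \<in> ZD D. \<not> qunit D z \<and> z \<notin> pideal D (qof_int p) \<and>
      (\<exists>m \<in> ZD D. m \<notin> pideal D (qof_int p) \<and> qmul D z m \<in> pideal D (qof_int p))}"

text \<open>2x2 matrices ((a, b), (c, d)) = [[a, b], [c, d]] over Q(sqrt D) and their product.\<close>
type_synonym qmat = "(qd \<times> qd) \<times> (qd \<times> qd)"

definition mmul2 :: "int \<Rightarrow> qmat \<Rightarrow> qmat \<Rightarrow> qmat" where
  "mmul2 D M N =
    (let a = fst (fst M); b = snd (fst M); c = fst (snd M); d = snd (snd M);
         e = fst (fst N); f = snd (fst N); g = fst (snd N); h = snd (snd N)
     in ((qadd (qmul D a e) (qmul D b g), qadd (qmul D a f) (qmul D b h)),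
         (qadd (qmul D c e) (qmul D d g), qadd (qmul D c f) (qmul D d h))))"

definition Amat :: "int \<Rightarrow> int \<Rightarrow> qd \<Rightarrow> qmat" where
  "Amat D p z = ((qof_int p, z), (qcnj z, (qnorm D z / of_int p, 0)))"

definition CZ :: "int \<Rightarrow> int \<Rightarrow> qd \<Rightarrow> bool" where
  "CZ D p z \<longleftrightarrow> (\<exists>a \<in> ZD D. \<exists>b \<in> ZD D. \<exists>c \<in> ZD D.
      qmul D a (qsub qone a) = qmul D b c \<and>
      Amat D p z = mmul2 D ((a, b), (c, qsub qone a))
                           ((qcnj a, qcnj c), (qcnj b, qsub qone (qcnj a))))"

definition cond1 :: "int \<Rightarrow> int \<Rightarrow> rat \<Rightarrow> int \<Rightarrow> int \<Rightarrow> bool" where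
  "cond1 D p k z1 z2 \<longleftrightarrow> (\<exists>b1 b2 :: int.
     let P = rat_of_int p; d = rat_of_int D; x1 = rat_of_int z1; x2 = rat_of_int z2;
         y1 = rat_of_int b1; y2 = rat_of_int b2;
         a1 = (4 * P - x1 * y1 + x2 * y2 * d) / (2 * P);
         a2 = (x2 * y1 - x1 * y2) / (2 * P);
         c1 = (- (x1^2 + x2^2 * d) * y1 + 2 * x1 * x2 * d * y2 + 4 * x1 * P) / (4 * P^2);
         c2 = (2 * x1 * x2 * y1 - (x1^2 + x2^2 * d) * y2 - 4 * x2 * P) / (4 * P^2)
     in a1 \<in> \<int> \<and> a2 \<in> \<int> \<and> c1 \<in> \<int> \<and> c2 \<in> \<int> \<and>
        0 = (P + k) * y1^2 - (P + k) * d * y2^2 - 2 * x1 * y1 + 2 * x2 * y2 * d + 4 * P - 4 * P^2 \<and>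
        (a1 / 2, a2 / 2) \<in> ZD D \<and> (y1 / 2, y2 / 2) \<in> ZD D \<and> (c1 / 2, c2 / 2) \<in> ZD D)"

definition cond2 :: "int \<Rightarrow> int \<Rightarrow> rat \<Rightarrow> int \<Rightarrow> int \<Rightarrow> bool" where
  "cond2 D p k z1 z2 \<longleftrightarrow> (\<exists>b1 b2 :: int.
     let P = rat_of_int p; d = rat_of_int D; x1 = rat_of_int z1; x2 = rat_of_int z2;
         y1 = rat_of_int b1; y2 = rat_of_int b2;
         a1 = (2 * P - x1 * y1 + x2 * y2 * d) / P;
         a2 = (x2 * y1 - x1 * y2) / P;
         c1 = (- (x1^2 + x2^2 * d) * y1 + 2 * x1 * x2 * d * y2 + 2 * x1 * P) / (P^2);
         c2 = (2 * x1 * x2 * y1 - (x1^2 + x2^2 * d) * y2 - 2 * x2 * P) / (P^2)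
     in a1 \<in> \<int> \<and> a2 \<in> \<int> \<and> c1 \<in> \<int> \<and> c2 \<in> \<int> \<and>
        0 = (P + k) * y1^2 - (P + k) * d * y2^2 - 4 * x1 * y1 + 4 * x2 * y2 * d + 4 * P - 4 * P^2 \<and>
        (a1 / 2, a2 / 2) \<in> ZD D \<and> (y1 / 2, y2 / 2) \<in> ZD D \<and> (c1 / 2, c2 / 2) \<in> ZD D)"

definition cond3 :: "int \<Rightarrow> int \<Rightarrow> rat \<Rightarrow> int \<Rightarrow> int \<Rightarrow> bool" where
  "cond3 D p k z1 z2 \<longleftrightarrow> (\<exists>b1 b2 :: int.
     let P = rat_of_int p; d = rat_of_int D; x1 = rat_of_int z1; x2 = rat_of_int z2;
         y1 = rat_of_int b1; y2 = rat_of_int b2;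
         a1 = (P - x1 * y1 + x2 * y2 * d) / P;
         a2 = (x2 * y1 - x1 * y2) / P;
         c1 = (- (x1^2 + x2^2 * d) * y1 + 2 * x1 * x2 * d * y2 + x1 * P) / (P^2);
         c2 = (2 * x1 * x2 * y1 - (x1^2 + x2^2 * d) * y2 - x2 * P) / (P^2)
     in a1 \<in> \<int> \<and> a2 \<in> \<int> \<and> c1 \<in> \<int> \<and> c2 \<in> \<int> \<and>
        0 = (P + k) * y1^2 - (P + k) * d * y2^2 - 2 * x1 * y1 + 2 * x2 * d * y2 + P - P^2)"

end

theory Submission
  imports Defs
begin

(* A factor M = [[a, b], [c, 1 - a]] as in (CZ) has trace 1 and determinant a(1 - a) - bc = 0.
  Multiplying the entry conj z = c conj a + (1 - a) conj b of M M^* by b and by a, and using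
  a(1 - a) = bc and p = N a + N b (N the norm), gives b conj z = (1 - a) p and a conj z = c p.
  So b alone determines a = 1 - b conj z / p and c = a conj z / p, and conversely for these
  a and c the single equation p = N a + N b already forces a(1 - a) = bc and M M^* = A(p, z).
  Hence (CZ) holds iff some b in Z[sqrt D] makes a and c integral with N a + N b = p; writing
  z and b with denominators 1 or 2 turns this into the three lists of conditions. *)

(* In coordinates over Q(sqrt d), with z = (x1, x2), the conclusions read
  p a = p - b conj z and p c = a conj z. *)
lemma idempotent_factor_first_row:
  fixes a1 a2 b1 b2 c1 c2 x1 x2 d P :: "'a::idom"
  assumes "a1 * (1 - a1) - d * a2 * a2 = b1 * c1 + d * b2 * c2"
    and "a2 * (1 - a1) - a1 * a2 = b1 * c2 + b2 * c1"
    and "P = a1 * a1 - d * a2 * a2 + b1 * b1 - d * b2 * b2"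
    and "x1 = a1 * c1 - d * a2 * c2 + b1 * (1 - a1) + d * b2 * a2"
    and "x2 = a2 * c1 - a1 * c2 + b1 * a2 + b2 * (1 - a1)"
  shows "P * a1 = P - (b1 * x1 - d * b2 * x2)" and "P * a2 = b1 * x2 - b2 * x1"
    and "P * c1 = a1 * x1 - d * a2 * x2" and "P * c2 = a2 * x1 - a1 * x2"
  using assms by algebra+

lemma idempotent_factor_from_first_row:
  fixes a1 a2 b1 b2 c1 c2 x1 x2 d P K :: "'a::idom"
  assumes "P \<noteq> 0"
    and "P * a1 = P - (b1 * x1 - d * b2 * x2)" and "P * a2 = b1 * x2 - b2 * x1"
    and "P * c1 = a1 * x1 - d * a2 * x2" and "P * c2 = a2 * x1 - a1 * x2"
    and "P = a1 * a1 - d * a2 * a2 + b1 * b1 - d * b2 * b2"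
    and "K * P = x1 * x1 - d * x2 * x2"
  shows "a1 * (1 - a1) - d * a2 * a2 = b1 * c1 + d * b2 * c2"
    and "a2 * (1 - a1) - a1 * a2 = b1 * c2 + b2 * c1"
    and "x1 = a1 * c1 - d * a2 * c2 + b1 * (1 - a1) + d * b2 * a2"
    and "x2 = a2 * c1 - a1 * c2 + b1 * a2 + b2 * (1 - a1)"
    and "K = c1 * c1 - d * c2 * c2 + (1 - a1) * (1 - a1) - d * a2 * a2"
proof -
  have "P * (a1 * (1 - a1) - d * a2 * a2 - (b1 * c1 + d * b2 * c2)) = 0"
    "P * (a2 * (1 - a1) - a1 * a2 - (b1 * c2 + b2 * c1)) = 0"
    "P * (x1 - (a1 * c1 - d * a2 * c2 + b1 * (1 - a1) + d * b2 * a2)) = 0"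
    "P * (x2 - (a2 * c1 - a1 * c2 + b1 * a2 + b2 * (1 - a1))) = 0"
    "P * P * (K - (c1 * c1 - d * c2 * c2 + (1 - a1) * (1 - a1) - d * a2 * a2)) = 0"
    using assms(2-) by algebra+
  then show "a1 * (1 - a1) - d * a2 * a2 = b1 * c1 + d * b2 * c2"
    and "a2 * (1 - a1) - a1 * a2 = b1 * c2 + b2 * c1"
    and "x1 = a1 * c1 - d * a2 * c2 + b1 * (1 - a1) + d * b2 * a2"
    and "x2 = a2 * c1 - a1 * c2 + b1 * a2 + b2 * (1 - a1)"
    and "K = c1 * c1 - d * c2 * c2 + (1 - a1) * (1 - a1) - d * a2 * a2"
    using \<open>P \<noteq> 0\<close> by simp_all
qed

lemma qmul_one_minus_eq_qmul_iff:
  "qmul D (a1, a2) (qsub qone (a1, a2)) = qmul D (b1, b2) (c1, c2) \<longleftrightarrow>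
     a1 * (1 - a1) - of_int D * a2 * a2 = b1 * c1 + of_int D * b2 * c2 \<and>
     a2 * (1 - a1) - a1 * a2 = b1 * c2 + b2 * c1"
  by (simp add: qmul_def qsub_def qone_def algebra_simps)

lemma Amat_eq_factor_product_iff:
  "Amat D p (x1, x2) = mmul2 D (((a1, a2), (b1, b2)), ((c1, c2), qsub qone (a1, a2)))
      ((qcnj (a1, a2), qcnj (c1, c2)), (qcnj (b1, b2), qsub qone (qcnj (a1, a2)))) \<longleftrightarrow>
   of_int p = a1 * a1 - of_int D * a2 * a2 + b1 * b1 - of_int D * b2 * b2 \<and>
   x1 = a1 * c1 - of_int D * a2 * c2 + b1 * (1 - a1) + of_int D * b2 * a2 \<and>
   x2 = a2 * c1 - a1 * c2 + b1 * a2 + b2 * (1 - a1) \<and>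
   qnorm D (x1, x2) / of_int p =
     c1 * c1 - of_int D * c2 * c2 + (1 - a1) * (1 - a1) - of_int D * a2 * a2"
  by (simp add: Amat_def mmul2_def qmul_def qsub_def qone_def qadd_def qcnj_def qof_int_def)
    (auto simp: algebra_simps)

definition qscale :: "rat \<Rightarrow> qd \<Rightarrow> qd" where
  "qscale r w = (r * fst w, r * snd w)"

definition cz_a :: "int \<Rightarrow> int \<Rightarrow> qd \<Rightarrow> qd \<Rightarrow> qd" where
  "cz_a D p z b = qsub qone (qscale (1 / of_int p) (qmul D b (qcnj z)))"

definition cz_c :: "int \<Rightarrow> int \<Rightarrow> qd \<Rightarrow> qd \<Rightarrow> qd" where
  "cz_c D p z b = qscale (1 / of_int p) (qmul D (cz_a D p z b) (qcnj z))"

lemma cz_a_coords: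
  "cz_a D p z b = (1 - (fst b * fst z - of_int D * snd b * snd z) / of_int p,
                   (fst b * snd z - snd b * fst z) / of_int p)"
  by (simp add: cz_a_def qsub_def qone_def qscale_def qmul_def qcnj_def diff_divide_distrib)

lemma cz_c_coords:
  "cz_c D p z b =
    ((fst (cz_a D p z b) * fst z - of_int D * snd (cz_a D p z b) * snd z) / of_int p,
     (snd (cz_a D p z b) * fst z - fst (cz_a D p z b) * snd z) / of_int p)"
  unfolding cz_c_def by (simp add: qscale_def qmul_def qcnj_def field_simps)

lemma CZ_factor_determined_by_first_row:
  assumes "p \<noteq> 0"
    and det: "qmul D a (qsub qone a) = qmul D b c"
    and prod: "Amat D p z = mmul2 D ((a, b), (c, qsub qone a))
                             ((qcnj a, qcnj c), (qcnj b, qsub qone (qcnj a)))"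
  shows "a = cz_a D p z b" and "c = cz_c D p z b"
    and "of_int p = qnorm D a + qnorm D b"
proof -
  obtain a1 a2 b1 b2 c1 c2 x1 x2
    where pairs: "a = (a1, a2)" "b = (b1, b2)" "c = (c1, c2)" "z = (x1, x2)"
    by (cases a, cases b, cases c, cases z) auto
  define P where "P = rat_of_int p"
  have "P \<noteq> 0" using \<open>p \<noteq> 0\<close> by (simp add: P_def)
  have eqs: "P = a1 * a1 - of_int D * a2 * a2 + b1 * b1 - of_int D * b2 * b2"
    "x1 = a1 * c1 - of_int D * a2 * c2 + b1 * (1 - a1) + of_int D * b2 * a2"
    "x2 = a2 * c1 - a1 * c2 + b1 * a2 + b2 * (1 - a1)"
    using prod unfolding pairs Amat_eq_factor_product_iff P_def by auto
  have det_eqs: "a1 * (1 - a1) - of_int D * a2 * a2 = b1 * c1 + of_int D * b2 * c2"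
    "a2 * (1 - a1) - a1 * a2 = b1 * c2 + b2 * c1"
    using det unfolding pairs qmul_one_minus_eq_qmul_iff by auto
  note row = idempotent_factor_first_row[OF det_eqs eqs]
  show a: "a = cz_a D p z b"
    using row(1,2) \<open>P \<noteq> 0\<close> by (simp add: pairs cz_a_coords P_def field_simps)
  show "c = cz_c D p z b"
    using row(3,4) \<open>P \<noteq> 0\<close>
    by (simp add: pairs cz_c_coords a[unfolded pairs, symmetric] P_def field_simps)
  show "of_int p = qnorm D a + qnorm D b"
    using eqs(1) by (simp add: pairs qnorm_def P_def power2_eq_square)
qed

lemma CZ_factor_from_first_row:
  assumes "p \<noteq> 0" and norm: "of_int p = qnorm D (cz_a D p z b) + qnorm D b"
  defines "a \<equiv> cz_a D p z b" and "c \<equiv> cz_c D p z b"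
  shows "qmul D a (qsub qone a) = qmul D b c"
    and "Amat D p z = mmul2 D ((a, b), (c, qsub qone a))
                             ((qcnj a, qcnj c), (qcnj b, qsub qone (qcnj a)))"
proof -
  obtain a1 a2 b1 b2 c1 c2 x1 x2
    where pairs: "a = (a1, a2)" "b = (b1, b2)" "c = (c1, c2)" "z = (x1, x2)"
    by (cases a, cases b, cases c, cases z) auto
  define P where "P = rat_of_int p"
  define K where "K = qnorm D z / P"
  have "P \<noteq> 0" using \<open>p \<noteq> 0\<close> by (simp add: P_def)
  have "a1 = 1 - (b1 * x1 - of_int D * b2 * x2) / P" "a2 = (b1 * x2 - b2 * x1) / P"
    using pairs(1) by (simp_all add: a_def cz_a_coords pairs P_def)
  moreover have "c1 = (a1 * x1 - of_int D * a2 * x2) / P" "c2 = (a2 * x1 - a1 * x2) / P"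
    using pairs(1,3) unfolding a_def c_def cz_c_coords by (simp_all add: pairs P_def)
  ultimately have row: "P * a1 = P - (b1 * x1 - of_int D * b2 * x2)" "P * a2 = b1 * x2 - b2 * x1"
    "P * c1 = a1 * x1 - of_int D * a2 * x2" "P * c2 = a2 * x1 - a1 * x2"
    using \<open>P \<noteq> 0\<close> by (simp_all add: field_simps)
  have P_eq: "P = a1 * a1 - of_int D * a2 * a2 + b1 * b1 - of_int D * b2 * b2"
    using norm unfolding a_def[symmetric] by (simp add: pairs qnorm_def P_def power2_eq_square)
  have "K * P = x1 * x1 - of_int D * x2 * x2"
    using \<open>P \<noteq> 0\<close> by (simp add: K_def qnorm_def pairs power2_eq_square)
  note factor = idempotent_factor_from_first_row[OF \<open>P \<noteq> 0\<close> row P_eq this]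
  show "qmul D a (qsub qone a) = qmul D b c"
    using factor by (simp add: pairs qmul_one_minus_eq_qmul_iff)
  show "Amat D p z = mmul2 D ((a, b), (c, qsub qone a))
                             ((qcnj a, qcnj c), (qcnj b, qsub qone (qcnj a)))"
    using factor P_eq unfolding pairs Amat_eq_factor_product_iff
    by (simp add: K_def P_def pairs)
qed

lemma CZ_iff_first_row:
  assumes "p \<noteq> 0"
  shows "CZ D p z \<longleftrightarrow> (\<exists>b \<in> ZD D. cz_a D p z b \<in> ZD D \<and> cz_c D p z b \<in> ZD D \<and>
                              of_int p = qnorm D (cz_a D p z b) + qnorm D b)"
    (is "_ \<longleftrightarrow> ?first_row")
proof
  assume "CZ D p z"
  then obtain a b c where "a \<in> ZD D" "b \<in> ZD D" "c \<in> ZD D"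
    and det: "qmul D a (qsub qone a) = qmul D b c"
    and prod: "Amat D p z = mmul2 D ((a, b), (c, qsub qone a))
                             ((qcnj a, qcnj c), (qcnj b, qsub qone (qcnj a)))"
    unfolding CZ_def by blast
  with CZ_factor_determined_by_first_row[OF assms det prod] show ?first_row
    by auto
next
  assume ?first_row
  with CZ_factor_from_first_row[OF assms] show "CZ D p z"
    unfolding CZ_def by blast
qed

(* The three cases of the theorem are (s, t) = (2, 2), (1, 2), (1, 1): z and b have
  denominators s and t. *)
lemma first_row_norm_condition_scaled:
  fixes D p :: int and s t x y u v :: rat
  assumes "p \<noteq> 0" "s \<noteq> 0" "t \<noteq> 0" and z: "z = (x / s, y / s)"
  defines "P \<equiv> rat_of_int p" and "d \<equiv> rat_of_int D" and "k \<equiv> qnorm D z / rat_of_int p"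
  shows "of_int p = qnorm D (cz_a D p z (u / t, v / t)) + qnorm D (u / t, v / t) \<longleftrightarrow>
    0 = (P + k) * u^2 - (P + k) * d * v^2 - 2 * (t / s) * x * u + 2 * (t / s) * y * v * d
        + t^2 * P - t^2 * P^2"
proof -
  have "P \<noteq> 0" using \<open>p \<noteq> 0\<close> by (simp add: P_def)
  have "t^2 * P * (qnorm D (cz_a D p z (u / t, v / t)) + qnorm D (u / t, v / t) - P) =
    (P + k) * u^2 - (P + k) * d * v^2 - 2 * (t / s) * x * u + 2 * (t / s) * y * v * d
        + t^2 * P - t^2 * P^2"
    using \<open>P \<noteq> 0\<close> \<open>s \<noteq> 0\<close> \<open>t \<noteq> 0\<close>
    by (simp add: cz_a_coords qnorm_def z k_def P_def d_def field_simps power2_eq_square)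
  moreover have "t^2 * P \<noteq> 0" using \<open>P \<noteq> 0\<close> \<open>t \<noteq> 0\<close> by simp
  ultimately show ?thesis by (auto simp: P_def)
qed

lemma ZD_half_coords_Ints:
  "D mod 4 = 1 \<Longrightarrow> (u / 2, v / 2) \<in> ZD D \<Longrightarrow> u \<in> \<int> \<and> (v :: rat) \<in> \<int>"
  by (auto simp: ZD_def)

lemma ZD_iff_Ints: "D mod 4 \<noteq> 1 \<Longrightarrow> (u, v) \<in> ZD D \<longleftrightarrow> u \<in> \<int> \<and> v \<in> \<int>"
  by (auto simp: ZD_def elim!: Ints_cases)

lemma bex_ZD_half_coords:
  "D mod 4 = 1 \<Longrightarrow> (\<exists>b \<in> ZD D. Q b) \<longleftrightarrow>
    (\<exists>b1 b2 :: int. (of_int b1 / 2, of_int b2 / 2) \<in> ZD D \<and> Q (of_int b1 / 2, of_int b2 / 2))"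
  by (smt (verit, del_insts) ZD_def mem_Collect_eq)

lemma bex_ZD_int_coords:
  "D mod 4 \<noteq> 1 \<Longrightarrow> (\<exists>b \<in> ZD D. Q b) \<longleftrightarrow> (\<exists>b1 b2 :: int. Q (of_int b1, of_int b2))"
  by (auto simp: ZD_def)

lemma first_row_conditions_half_coords:
  assumes "D mod 4 = 1"
    and "cz_a D p z b = (a1 / 2, a2 / 2)" and "cz_c D p z b = (c1 / 2, c2 / 2)"
    and "of_int p = qnorm D (cz_a D p z b) + qnorm D b \<longleftrightarrow> 0 = e"
  shows "b \<in> ZD D \<and> cz_a D p z b \<in> ZD D \<and> cz_c D p z b \<in> ZD D \<and>
           of_int p = qnorm D (cz_a D p z b) + qnorm D b \<longleftrightarrow>
         a1 \<in> \<int> \<and> a2 \<in> \<int> \<and> c1 \<in> \<int> \<and> c2 \<in> \<int> \<and> 0 = e \<and>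
           (a1 / 2, a2 / 2) \<in> ZD D \<and> b \<in> ZD D \<and> (c1 / 2, c2 / 2) \<in> ZD D"
  using assms ZD_half_coords_Ints[OF assms(1), of a1 a2] ZD_half_coords_Ints[OF assms(1), of c1 c2]
  by auto

lemma first_row_conditions_int_coords:
  assumes "D mod 4 \<noteq> 1"
    and "cz_a D p z b = (a1, a2)" and "cz_c D p z b = (c1, c2)"
    and "of_int p = qnorm D (cz_a D p z b) + qnorm D b \<longleftrightarrow> 0 = e"
  shows "cz_a D p z b \<in> ZD D \<and> cz_c D p z b \<in> ZD D \<and>
           of_int p = qnorm D (cz_a D p z b) + qnorm D b \<longleftrightarrow>
         a1 \<in> \<int> \<and> a2 \<in> \<int> \<and> c1 \<in> \<int> \<and> c2 \<in> \<int> \<and> 0 = e"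
  using assms by (simp add: ZD_iff_Ints)

lemma CZ_iff_cond1:
  assumes p: "p \<noteq> 0" and D: "D mod 4 = 1" and z: "z = (of_int z1 / 2, of_int z2 / 2)"
  shows "CZ D p z \<longleftrightarrow> cond1 D p (qnorm D z / of_int p) z1 z2"
  unfolding CZ_iff_first_row[OF p] bex_ZD_half_coords[OF D] cond1_def Let_def
  apply (intro ex_cong1 first_row_conditions_half_coords[OF D])
  subgoal using p by (simp add: z cz_a_coords field_simps)
  subgoal using p by (simp add: z cz_c_coords cz_a_coords field_simps power2_eq_square)
  subgoal for b1 b2
    using first_row_norm_condition_scaled[where s = 2 and t = 2 and u = "of_int b1"
        and v = "of_int b2", OF p _ _ z] by simp
  done

lemma CZ_iff_cond2:
  assumes p: "p \<noteq> 0" and D: "D mod 4 = 1" and z: "z = (of_int z1, of_int z2)"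
  shows "CZ D p z \<longleftrightarrow> cond2 D p (qnorm D z / of_int p) z1 z2"
  unfolding CZ_iff_first_row[OF p] bex_ZD_half_coords[OF D] cond2_def Let_def
  apply (intro ex_cong1 first_row_conditions_half_coords[OF D])
  subgoal using p by (simp add: z cz_a_coords field_simps)
  subgoal using p by (simp add: z cz_c_coords cz_a_coords field_simps power2_eq_square)
  subgoal for b1 b2
    using first_row_norm_condition_scaled[where s = 1 and t = 2
        and x = "of_int z1" and y = "of_int z2" and u = "of_int b1" and v = "of_int b2", OF p] z by simp
  done

lemma CZ_iff_cond3:
  assumes p: "p \<noteq> 0" and D: "D mod 4 \<noteq> 1" and z: "z = (of_int z1, of_int z2)"
  shows "CZ D p z \<longleftrightarrow> cond3 D p (qnorm D z / of_int p) z1 z2"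
  unfolding CZ_iff_first_row[OF p] bex_ZD_int_coords[OF D] cond3_def Let_def
  apply (intro ex_cong1 first_row_conditions_int_coords[OF D])
  subgoal using p by (simp add: z cz_a_coords field_simps)
  subgoal using p by (simp add: z cz_c_coords cz_a_coords field_simps power2_eq_square)
  subgoal for b1 b2
    using first_row_norm_condition_scaled[where s = 1 and t = 1
        and x = "of_int z1" and y = "of_int z2" and u = "of_int b1" and v = "of_int b2", OF p] z by (simp add: ac_simps)
  done

theorem theorem3p2:
  fixes D p :: int and z :: qd
  assumes "squarefree D" and "D \<noteq> 1"
    and "prime p"
    and "irreducible_ZD D (qof_int p)" and "\<not> prime_ZD D (qof_int p)"
    and "z \<in> Ip D p"
  defines "k \<equiv> qnorm D z / of_int p"
  shows "(\<forall>z1 z2 :: int. D mod 4 = 1 \<and> odd z1 \<and> odd z2 \<and>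
              z = (of_int z1 / 2, of_int z2 / 2) \<longrightarrow> (CZ D p z \<longleftrightarrow> cond1 D p k z1 z2))
       \<and> (\<forall>z1 z2 :: int. D mod 4 = 1 \<and> z = (of_int z1, of_int z2)
              \<longrightarrow> (CZ D p z \<longleftrightarrow> cond2 D p k z1 z2))
       \<and> (\<forall>z1 z2 :: int. (D mod 4 = 2 \<or> D mod 4 = 3) \<and> z = (of_int z1, of_int z2)
              \<longrightarrow> (CZ D p z \<longleftrightarrow> cond3 D p k z1 z2))"
proof -
  have p: "p \<noteq> 0" using \<open>prime p\<close> by auto
  show ?thesis
    unfolding k_def using CZ_iff_cond1[OF p] CZ_iff_cond2[OF p] CZ_iff_cond3[OF p] by auto
qed

end
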